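(* Let $\varphi\in\Delta_1^m$ and let $\mathcal{R}^{\mathrm{use}}_\varphi=\{p\in\mathcal{P}:\exists f\in\mathcal{W}^\varphi \text{ with } f_p>0\}$. Then: (1) there exists $f^\varphi\in\mathcal{W}^\varphi$ with $f^\varphi_p>0$ for all $p\in\mathcal{R}^{\mathrm{use}}_\varphi$; (2) for every $p\in\mathcal{P}$, $p\in\mathcal{R}^{\mathrm{use}}_\varphi$ if and only if $f^\varphi_{e_k}>0$ for all edges $e_k\in p$.
   Context: Let $\mathcal{G}=(\mathcal{V},\mathcal{E})$ be a finite directed graph with an origin $v_o$ and a destination $v_d$, and let $\mathcal{P}$ be the (finite) set of acyclic directed paths from $v_o$ to $v_d$, $n=|\mathcal{P}|$. The set of feasible path-flows is $\mathcal{H}=\{f\in\mathbb{R}^n_{\ge0}:\sum_{p\in\mathcal{P}}f_p=1\}$. For a path-flow $f$, the flow on edge $e_k$ is $f_{e_k}=\sum_{p\ni e_k}f_p$. There is a finite set of states $\Theta=\{\theta_1,\dots,\theta_m\}$; in each state $\theta_s$ each edge $e_k$ has a known cost function $C^{\theta_s}_{e_k}:\mathbb{R}_{\ge0}\to\mathbb{R}_{\ge0}$ that is continuous and strictly increasing. The cost of path $p$ in state $\theta_s$ is $C^{\theta_s}_p(f)=\sum_{e_k\in p}C^{\theta_s}_{e_k}(f_{e_k})$. For $\varphi\in\Delta_1^m:=\{x\in\mathbb{R}^m_{\ge0}:\sum_i x_i=1\}$ the expected costs are $C^\varphi_p(f)=\sum_{s}\varphi_sC^{\theta_s}_p(f)$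 and $C^\varphi_{e_k}(x)=\sum_s\varphi_sC^{\theta_s}_{e_k}(x)$. A flow $f\in\mathcal{H}$ is a $\varphi$-based Wardrop equilibrium ($\varphi$-WE) if for all $p\in\mathcal{P}$ with $f_p>0$ we have $C^\varphi_p(f)\le C^\varphi_r(f)$ for all $r\in\mathcal{P}$; $\mathcal{W}^\varphi$ denotes the set of $\varphi$-WE. It is known that all elements of $\mathcal{W}^\varphi$ induce the same edge-flows, and conversely any $f\in\mathcal{H}$ inducing these edge-flows lies in $\mathcal{W}^\varphi$; the common edge-flow on $e_k$ is denoted $f^\varphi_{e_k}$. *)

theory Defs
  imports "HOL-Analysis.Analysis"
begin

text \<open>Directed graph: vertex set V, edge set E of ordered pairs.
  A path is represented by its list of vertices.\<close>

definition path_edges :: "'v list \<Rightarrow> ('v \<times> 'v) set" where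
  "path_edges p = set (zip p (tl p))"

definition od_paths :: "'v set \<Rightarrow> ('v \<times> 'v) set \<Rightarrow> 'v \<Rightarrow> 'v \<Rightarrow> 'v list set" where
  "od_paths V E vo vd = {p. p \<noteq> [] \<and> hd p = vo \<and> last p = vd \<and> distinct p
       \<and> set p \<subseteq> V \<and> path_edges p \<subseteq> E}"

definition feasible_flows :: "'p set \<Rightarrow> ('p \<Rightarrow> real) set" where
  "feasible_flows P = {f. (\<forall>p\<in>P. f p \<ge> 0) \<and> (\<forall>p. p \<notin> P \<longrightarrow> f p = 0) \<and> (\<Sum>p\<in>P. f p) = 1}"

definition edge_flow :: "'v list set \<Rightarrow> ('v list \<Rightarrow> real) \<Rightarrow> ('v \<times> 'v) \<Rightarrow> real" where
  "edge_flow P f e = (\<Sum>p\<in>{p\<in>P. e \<in> path_edges p}. f p)"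

definition prob_simplex :: "'s set \<Rightarrow> ('s \<Rightarrow> real) set" where
  "prob_simplex \<Theta> = {\<phi>. (\<forall>s\<in>\<Theta>. \<phi> s \<ge> 0) \<and> (\<Sum>s\<in>\<Theta>. \<phi> s) = 1}"

definition exp_edge_cost ::
  "'s set \<Rightarrow> ('s \<Rightarrow> ('v \<times> 'v) \<Rightarrow> real \<Rightarrow> real) \<Rightarrow> ('s \<Rightarrow> real) \<Rightarrow> ('v \<times> 'v) \<Rightarrow> real \<Rightarrow> real" where
  "exp_edge_cost \<Theta> C \<phi> e x = (\<Sum>s\<in>\<Theta>. \<phi> s * C s e x)"

definition exp_path_cost ::
  "'v list set \<Rightarrow> 's set \<Rightarrow> ('s \<Rightarrow> ('v \<times> 'v) \<Rightarrow> real \<Rightarrow> real) \<Rightarrow> ('s \<Rightarrow> real)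
    \<Rightarrow> ('v list \<Rightarrow> real) \<Rightarrow> 'v list \<Rightarrow> real" where
  "exp_path_cost P \<Theta> C \<phi> f p = (\<Sum>e\<in>path_edges p. exp_edge_cost \<Theta> C \<phi> e (edge_flow P f e))"

definition wardrop_eq ::
  "'v list set \<Rightarrow> 's set \<Rightarrow> ('s \<Rightarrow> ('v \<times> 'v) \<Rightarrow> real \<Rightarrow> real) \<Rightarrow> ('s \<Rightarrow> real)
    \<Rightarrow> ('v list \<Rightarrow> real) set" where
  "wardrop_eq P \<Theta> C \<phi> = {f \<in> feasible_flows P. \<forall>p\<in>P. f p > 0 \<longrightarrow>
       (\<forall>r\<in>P. exp_path_cost P \<Theta> C \<phi> f p \<le> exp_path_cost P \<Theta> C \<phi> f r)}"

definition used_paths ::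
  "'v list set \<Rightarrow> 's set \<Rightarrow> ('s \<Rightarrow> ('v \<times> 'v) \<Rightarrow> real \<Rightarrow> real) \<Rightarrow> ('s \<Rightarrow> real) \<Rightarrow> 'v list set" where
  "used_paths P \<Theta> C \<phi> = {p\<in>P. \<exists>f\<in>wardrop_eq P \<Theta> C \<phi>. f p > 0}"

end

theory Submission
  imports Defs
begin

text \<open>Equilibrium edge flows are unique by the monotonicity argument on the variational
  inequality, so the equilibria are exactly the feasible flows inducing these edge flows; this
  set is convex, and averaging equilibria that use each used path gives (1).
  For (2), freeze the edge costs at an equilibrium. Every used path is then a shortest path, hence
  so is each of its prefixes, and the shortest distance from the origin increases strictly along
  every edge carrying flow. Therefore a path all of whose edges carry flow is itself shortest, and
  it becomes used after repeatedly exchanging tails of used paths at common vertices, which leaves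
  all edge flows unchanged.
  An equilibrium exists since the Beckmann potential attains its minimum on the compact set of
  feasible flows.\<close>

lemma path_edges_Nil [simp]: "path_edges [] = {}"
  and path_edges_singleton [simp]: "path_edges [x] = {}"
  and path_edges_Cons_Cons [simp]: "path_edges (x # y # xs) = insert (x, y) (path_edges (y # xs))"
  by (auto simp: path_edges_def)

lemma finite_path_edges [simp]: "finite (path_edges xs)"
  by (simp add: path_edges_def)

lemma path_edges_append: "path_edges (xs @ v # ys) = path_edges (xs @ [v]) \<union> path_edges (v # ys)"
proof (induction xs)
  case (Cons a xs)
  then show ?case by (cases xs) auto
qed simp

lemma path_edges_prefix: "path_edges xs \<subseteq> path_edges (xs @ ys)"
  unfolding path_edges_def by (induction xs rule: induct_list012) auto

lemma path_edges_nth: "Suc i < length xs \<Longrightarrow> (xs ! i, xs ! Suc i) \<in> path_edges xs"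
  unfolding path_edges_def in_set_conv_nth by (rule exI[of _ i]) (auto simp: nth_tl)

lemma path_edgesD: "(a, b) \<in> path_edges xs \<Longrightarrow> a \<in> set (butlast xs) \<and> b \<in> set (tl xs)"
proof (induction xs rule: induct_list012)
  case (3 x y zs)
  then show ?case by (cases zs) auto
qed auto

lemma path_edges_split: "(a, b) \<in> path_edges xs \<Longrightarrow> \<exists>ys zs. xs = ys @ a # b # zs"
proof (induction xs rule: induct_list012)
  case (3 x y zs)
  show ?case
  proof (cases "(a, b) = (x, y)")
    case True
    then show ?thesis by (intro exI[of _ "[]"] exI[of _ zs]) auto
  next
    case False
    then obtain ys zs' where "y # zs = ys @ a # b # zs'" using 3 by auto
    then show ?thesis by (metis append_Cons)
  qed
qed auto

lemma path_edges_append_disjoint: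
  assumes "distinct (xs @ v # ys)"
  shows "path_edges (xs @ [v]) \<inter> path_edges (v # ys) = {}"
proof (rule ccontr)
  assume "\<not> ?thesis"
  then obtain a b where ab: "(a, b) \<in> path_edges (xs @ [v])" "(a, b) \<in> path_edges (v # ys)" by auto
  then have "a \<in> set xs" using path_edgesD[of a b "xs @ [v]"] by simp
  moreover have "a \<in> set (v # ys)" using path_edgesD[OF ab(2)] in_set_butlastD by metis
  ultimately show False using assms by auto
qed

lemma sum_path_edges_append:
  assumes "distinct (xs @ v # ys)"
  shows "sum w (path_edges (xs @ v # ys))
       = sum w (path_edges (xs @ [v])) + sum w (path_edges (v # ys))"
  unfolding path_edges_append[of xs v ys]
  by (rule sum.union_disjoint) (use path_edges_append_disjoint[OF assms] in auto)

lemma walk_contains_simple_path: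
  assumes "xs \<noteq> []"
  obtains ys where "ys \<noteq> []" "hd ys = hd xs" "last ys = last xs" "distinct ys"
    "set ys \<subseteq> set xs" "path_edges ys \<subseteq> path_edges xs"
  using assms
proof (induction "length xs" arbitrary: xs rule: less_induct)
  case less
  show ?case
  proof (cases "distinct xs")
    case True
    then show ?thesis using less.prems by blast
  next
    case False
    then obtain a y b c where xs: "xs = a @ [y] @ b @ [y] @ c" using not_distinct_decomp by blast
    let ?zs = "a @ y # c"
    have "path_edges ?zs = path_edges (a @ [y]) \<union> path_edges (y # c)"
      using path_edges_append[of a y c] by simp
    also have "\<dots> \<subseteq> path_edges (a @ [y]) \<union> path_edges (y # b @ [y]) \<union> path_edges (y # c)" by blast
    also have "\<dots> = path_edges xs"
      using path_edges_append[of a y "b @ [y] @ c"] path_edges_append[of "y # b" y c] xs by auto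
    finally have "path_edges ?zs \<subseteq> path_edges xs" .
    moreover have "hd ?zs = hd xs" "last ?zs = last xs" "set ?zs \<subseteq> set xs"
      using xs by (cases a; cases c; auto)+
    moreover have "length ?zs < length xs" using xs by simp
    ultimately show ?thesis
      using less.hyps[of ?zs] less.prems(1) by (metis Nil_is_append_conv list.discI order_trans)
  qed
qed

lemma distinct_if_increasing_along_path:
  fixes d :: "'a \<Rightarrow> real"
  assumes "\<forall>(x, y) \<in> path_edges xs. d x < d y"
  shows "distinct xs"
proof -
  have "distinct xs \<and> (\<forall>z \<in> set (tl xs). d (hd xs) < d z)"
    using assms
  proof (induction xs rule: induct_list012)
    case (3 x y zs)
    then have "distinct (y # zs)" "\<forall>z \<in> set (y # zs). d x < d z" by fastforce+
    then show ?case by auto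
  qed auto
  then show ?thesis ..
qed

lemma sum_path_edges_telescope:
  fixes d :: "'a \<Rightarrow> real"
  assumes "distinct xs" "xs \<noteq> []" "\<forall>(x, y) \<in> path_edges xs. d y = d x + w (x, y)"
  shows "sum w (path_edges xs) = d (last xs) - d (hd xs)"
  using assms
proof (induction xs rule: induct_list012)
  case (3 x y zs)
  have "(x, y) \<notin> path_edges (y # zs)"
    using path_edgesD[of x y "y # zs"] "3.prems"(1) by (metis distinct.simps(2) in_set_butlastD)
  then show ?case using 3 by auto
qed auto

lemma finite_od_paths: "finite V \<Longrightarrow> finite (od_paths V E a b)"
  by (rule finite_subset[OF _ finite_subset_distinct]) (auto simp: od_paths_def)

lemma edge_flow_add: "edge_flow P (\<lambda>p. f p + g p) e = edge_flow P f e + edge_flow P g e"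
  and edge_flow_diff: "edge_flow P (\<lambda>p. f p - g p) e = edge_flow P f e - edge_flow P g e"
  and edge_flow_cmult: "edge_flow P (\<lambda>p. t * f p) e = t * edge_flow P f e"
  by (simp_all add: edge_flow_def sum.distrib sum_subtractf sum_distrib_left)

lemma edge_flow_path_indicator:
  assumes "finite P" "q \<in> P"
  shows "edge_flow P (\<lambda>p. if p = q then 1 else 0) e = (if e \<in> path_edges q then 1 else 0)"
  using assms by (simp add: edge_flow_def sum.delta)

lemma edge_flow_outside_paths: "e \<notin> \<Union> (path_edges ` P) \<Longrightarrow> edge_flow P f e = 0"
  unfolding edge_flow_def by (rule sum.neutral) auto

lemma feasible_flowsD:
  assumes "f \<in> feasible_flows P"
  shows feasible_flows_nonneg: "p \<in> P \<Longrightarrow> f p \<ge> 0"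
    and feasible_flows_outside: "p \<notin> P \<Longrightarrow> f p = 0"
    and feasible_flows_sum: "sum f P = 1"
  using assms by (simp_all add: feasible_flows_def)

lemma feasible_flows_add_balanced:
  assumes "f \<in> feasible_flows P" "\<And>p. p \<notin> P \<Longrightarrow> d p = 0" "sum d P = 0"
    "\<And>p. p \<in> P \<Longrightarrow> f p + d p \<ge> 0"
  shows "(\<lambda>p. f p + d p) \<in> feasible_flows P"
  using assms by (auto simp: feasible_flows_def sum.distrib)

lemma feasible_flows_pos_path:
  assumes "f \<in> feasible_flows P"
  obtains q where "q \<in> P" "f q > 0"
proof (rule ccontr)
  assume "\<not> thesis"
  then have "sum f P \<le> 0" using that by (force intro: sum_nonpos)
  then show False using feasible_flows_sum[OF assms] by simp
qed

lemma edge_flow_nonneg: "f \<in> feasible_flows P \<Longrightarrow> edge_flow P f e \<ge> 0"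
  unfolding edge_flow_def by (rule sum_nonneg) (simp add: feasible_flows_nonneg)

lemma edge_flow_le_1:
  assumes "finite P" "f \<in> feasible_flows P"
  shows "edge_flow P f e \<le> 1"
proof -
  have "edge_flow P f e \<le> sum f P"
    unfolding edge_flow_def by (rule sum_mono2) (use assms feasible_flows_nonneg in auto)
  then show ?thesis using feasible_flows_sum[OF assms(2)] by simp
qed

lemma path_flow_le_edge_flow:
  assumes "finite P" "f \<in> feasible_flows P" "p \<in> P" "e \<in> path_edges p"
  shows "f p \<le> edge_flow P f e"
  unfolding edge_flow_def by (rule member_le_sum) (use assms feasible_flows_nonneg in auto)

lemma edge_flow_posE:
  assumes "f \<in> feasible_flows P" "edge_flow P f e > 0"
  obtains q where "q \<in> P" "e \<in> path_edges q" "f q > 0"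
proof (rule ccontr)
  assume "\<not> thesis"
  then have "edge_flow P f e \<le> 0" using that unfolding edge_flow_def by (force intro: sum_nonpos)
  then show False using assms(2) by simp
qed

lemma indicator_path_edges_append:
  assumes "distinct (xs @ v # ys)"
  shows "(if e \<in> path_edges (xs @ v # ys) then 1 else 0 :: real)
       = (if e \<in> path_edges (xs @ [v]) then 1 else 0) + (if e \<in> path_edges (v # ys) then 1 else 0)"
  using path_edges_append_disjoint[OF assms] path_edges_append[of xs v ys] by auto

lemma path_indicator_feasible:
  "finite P \<Longrightarrow> q \<in> P \<Longrightarrow> (\<lambda>p. if p = q then 1 else 0) \<in> feasible_flows P"
  by (auto simp: feasible_flows_def sum.delta)

lemma feasible_flows_shift:
  assumes "finite P" "f \<in> feasible_flows P" "p \<in> P" "r \<in> P" "r \<noteq> p" "0 \<le> t" "t \<le> f p"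
  shows "(\<lambda>q. f q + t * ((if q = r then 1 else 0) - (if q = p then 1 else 0))) \<in> feasible_flows P"
proof (rule feasible_flows_add_balanced[OF assms(2)])
  show "t * ((if q = r then 1 else 0) - (if q = p then 1 else 0)) = 0" if "q \<notin> P" for q
    using that assms(3,4) by auto
  show "(\<Sum>q\<in>P. t * ((if q = r then 1 else 0) - (if q = p then 1 else 0))) = 0"
    using assms(1,3,4) by (simp add: sum_distrib_left[symmetric] sum_subtractf sum.delta)
  show "f q + t * ((if q = r then 1 else 0) - (if q = p then 1 else 0)) \<ge> 0" if "q \<in> P" for q
    using assms(5-7) feasible_flows_nonneg[OF assms(2) that] by (cases "q = p") auto
qed

lemma compact_feasible_flows:
  assumes "finite P"
  shows "compact (feasible_flows P)"
proof -
  let ?B = "\<lambda>p. if p \<in> P then {0..1::real} else {0}"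
  have "compactin (product_topology (\<lambda>_. euclidean) UNIV) (PiE UNIV ?B)"
    unfolding compactin_PiE by auto
  then have box: "compact (PiE UNIV ?B)"
    by (metis compactin_euclidean_iff euclidean_product_topology)
  have "continuous_on UNIV (\<lambda>f::'a \<Rightarrow> real. \<Sum>p\<in>P. f p)"
    by (intro continuous_on_sum) simp
  then have simplex: "closed {f. (\<Sum>p\<in>P. f p) = (1::real)}"
    using closed_Collect_eq[OF _ continuous_on_const[of UNIV 1]] by simp
  have "feasible_flows P = PiE UNIV ?B \<inter> {f. (\<Sum>p\<in>P. f p) = 1}"
  proof (intro equalityI subsetI)
    fix f assume f: "f \<in> feasible_flows P"
    have "f p \<le> 1" if "p \<in> P" for p
      using member_le_sum[of p P f] that assms feasible_flowsD[OF f] by fastforce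
    then show "f \<in> PiE UNIV ?B \<inter> {f. (\<Sum>p\<in>P. f p) = 1}"
      using feasible_flowsD[OF f] by (auto simp: PiE_UNIV_domain)
  next
    fix f assume "f \<in> PiE UNIV ?B \<inter> {f. (\<Sum>p\<in>P. f p) = 1}"
    then show "f \<in> feasible_flows P"
      unfolding feasible_flows_def PiE_UNIV_domain Pi_def by (auto split: if_splits)
  qed
  then show ?thesis using compact_Int_closed[OF box simplex] by simp
qed

lemma integral_increment_le:
  fixes g :: "real \<Rightarrow> real"
  assumes cont: "continuous_on {0..1} g" and mono: "mono_on {0..1} g"
    and x: "x \<in> {0..1}" and y: "y \<in> {0..1}"
  shows "integral {0..y} g - integral {0..x} g \<le> (y - x) * g y"
proof -
  have int: "g integrable_on {a..b}" if "0 \<le> a" "b \<le> 1" for a b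
    by (rule integrable_continuous_interval, rule continuous_on_subset[OF cont]) (use that in auto)
  show ?thesis
  proof (cases "x \<le> y")
    case True
    have "integral {0..x} g + integral {x..y} g = integral {0..y} g"
      using x y True by (intro Henstock_Kurzweil_Integration.integral_combine int) auto
    moreover have "integral {x..y} g \<le> integral {x..y} (\<lambda>_. g y)"
      using x y by (intro integral_le int) (auto intro: mono_onD[OF mono])
    ultimately show ?thesis using True by simp
  next
    case False
    have "integral {0..y} g + integral {y..x} g = integral {0..x} g"
      using x y False by (intro Henstock_Kurzweil_Integration.integral_combine int) auto
    moreover have "integral {y..x} (\<lambda>_. g y) \<le> integral {y..x} g"
      using x y by (intro integral_le int) (auto intro: mono_onD[OF mono])
    ultimately show ?thesis using False by (simp add: algebra_simps)
  qed
qed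

locale routing_game =
  fixes V :: "'v set" and E :: "('v \<times> 'v) set" and vo vd :: 'v
    and \<Theta> :: "'s set" and C :: "'s \<Rightarrow> ('v \<times> 'v) \<Rightarrow> real \<Rightarrow> real" and \<phi> :: "'s \<Rightarrow> real"
  assumes finite_V: "finite V" and vo_in_V: "vo \<in> V"
    and paths_nonempty: "od_paths V E vo vd \<noteq> {}"
    and finite_states: "finite \<Theta>"
    and cost_continuous: "\<And>s e. s \<in> \<Theta> \<Longrightarrow> e \<in> E \<Longrightarrow> continuous_on {0..} (C s e)"
    and cost_strict_mono: "\<And>s e. s \<in> \<Theta> \<Longrightarrow> e \<in> E \<Longrightarrow> strict_mono_on {0..} (C s e)"
    and cost_nonneg: "\<And>s e x. s \<in> \<Theta> \<Longrightarrow> e \<in> E \<Longrightarrow> x \<ge> 0 \<Longrightarrow> C s e x \<ge> 0"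
    and belief: "\<phi> \<in> prob_simplex \<Theta>"
begin

abbreviation "P \<equiv> od_paths V E vo vd"
abbreviation "H \<equiv> feasible_flows P"
abbreviation "WE \<equiv> wardrop_eq P \<Theta> C \<phi>"
abbreviation "c \<equiv> exp_edge_cost \<Theta> C \<phi>"
abbreviation "ef \<equiv> edge_flow P"
abbreviation "path_cost \<equiv> exp_path_cost P \<Theta> C \<phi>"
abbreviation "EP \<equiv> \<Union> (path_edges ` P)"

definition edge_cost :: "('v list \<Rightarrow> real) \<Rightarrow> ('v \<times> 'v) \<Rightarrow> real" where
  "edge_cost f e = c e (ef f e)"

lemma path_cost_eq: "path_cost f p = sum (edge_cost f) (path_edges p)"
  by (simp add: exp_path_cost_def edge_cost_def)

lemma path_cost_cong: "(\<And>e. ef f e = ef g e) \<Longrightarrow> path_cost f p = path_cost g p"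
  by (simp add: exp_path_cost_def)

lemma finite_P: "finite P"
  by (rule finite_od_paths[OF finite_V])

lemma finite_EP: "finite EP"
  using finite_P by simp

lemma path_edges_subset_E: "p \<in> P \<Longrightarrow> path_edges p \<subseteq> E"
  by (simp add: od_paths_def)

lemma EP_subset_E: "EP \<subseteq> E"
  using path_edges_subset_E by blast

lemma c_strict_mono:
  assumes "e \<in> E" "0 \<le> x" "x < y"
  shows "c e x < c e y"
proof -
  have \<phi>_nonneg: "\<forall>s\<in>\<Theta>. \<phi> s \<ge> 0" and "sum \<phi> \<Theta> = 1"
    using belief by (auto simp: prob_simplex_def)
  then obtain s0 where s0: "s0 \<in> \<Theta>" "\<phi> s0 > 0"
    using sum_nonpos[of \<Theta> \<phi>] by (force simp: not_less)
  have less: "C s e x < C s e y" if "s \<in> \<Theta>" for s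
    using cost_strict_mono[OF that assms(1)] assms by (auto simp: strict_mono_on_def)
  show ?thesis
    unfolding exp_edge_cost_def
  proof (rule sum_strict_mono_ex1[OF finite_states])
    show "\<forall>s\<in>\<Theta>. \<phi> s * C s e x \<le> \<phi> s * C s e y"
      using less \<phi>_nonneg by (simp add: less_imp_le mult_left_mono)
    show "\<exists>s\<in>\<Theta>. \<phi> s * C s e x < \<phi> s * C s e y"
      using s0 less[OF s0(1)] by (intro bexI[of _ s0]) simp_all
  qed
qed

lemma c_mono: "e \<in> E \<Longrightarrow> 0 \<le> x \<Longrightarrow> x \<le> y \<Longrightarrow> c e x \<le> c e y"
  using c_strict_mono by (metis order_le_less)

lemma c_nonneg:
  assumes "e \<in> E" "0 \<le> x"
  shows "c e x \<ge> 0"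
  using belief cost_nonneg assms
  unfolding exp_edge_cost_def prob_simplex_def by (simp add: sum_nonneg)

lemma c_pos: "e \<in> E \<Longrightarrow> 0 < x \<Longrightarrow> c e x > 0"
  using c_strict_mono[of e 0 x] c_nonneg[of e 0] by simp

lemma c_continuous: "e \<in> E \<Longrightarrow> continuous_on {0..} (c e)"
  unfolding exp_edge_cost_def using cost_continuous
  by (intro continuous_on_sum continuous_on_mult continuous_on_const) auto

lemma edge_cost_nonneg: "f \<in> H \<Longrightarrow> e \<in> E \<Longrightarrow> edge_cost f e \<ge> 0"
  unfolding edge_cost_def by (rule c_nonneg) (auto simp: edge_flow_nonneg)

lemma edge_flow_pos_in_E: "f \<in> H \<Longrightarrow> ef f e > 0 \<Longrightarrow> e \<in> E"
  by (metis edge_flow_posE path_edges_subset_E subsetD)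

lemma wardrop_eq_feasible: "f \<in> WE \<Longrightarrow> f \<in> H"
  by (simp add: wardrop_eq_def)

lemma wardrop_eq_common_cost:
  assumes "f \<in> WE"
  obtains L where "\<And>p. p \<in> P \<Longrightarrow> L \<le> path_cost f p" "\<And>p. p \<in> P \<Longrightarrow> f p > 0 \<Longrightarrow> path_cost f p = L"
proof -
  obtain q where q: "q \<in> P" "f q > 0"
    using feasible_flows_pos_path[OF wardrop_eq_feasible[OF assms]] .
  have "\<And>p r. p \<in> P \<Longrightarrow> f p > 0 \<Longrightarrow> r \<in> P \<Longrightarrow> path_cost f p \<le> path_cost f r"
    using assms by (simp add: wardrop_eq_def)
  with q show ?thesis
    by (intro that[of "path_cost f q"]) (auto intro: order_antisym)
qed

lemma sum_path_cost_eq_sum_edge_cost: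
  "(\<Sum>p\<in>P. h p * path_cost f p) = (\<Sum>e\<in>EP. ef h e * edge_cost f e)"
proof -
  have "(\<Sum>p\<in>P. h p * path_cost f p)
      = (\<Sum>p\<in>P. \<Sum>e\<in>EP. if e \<in> path_edges p then h p * edge_cost f e else 0)"
  proof (rule sum.cong[OF refl])
    fix p assume "p \<in> P"
    then have "EP \<inter> path_edges p = path_edges p" by blast
    then show "h p * path_cost f p = (\<Sum>e\<in>EP. if e \<in> path_edges p then h p * edge_cost f e else 0)"
      using sum.inter_restrict[OF finite_EP, of "\<lambda>e. h p * edge_cost f e" "path_edges p"]
      by (simp add: path_cost_eq sum_distrib_left)
  qed
  also have "\<dots> = (\<Sum>e\<in>EP. \<Sum>p\<in>P. if e \<in> path_edges p then h p * edge_cost f e else 0)"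
    by (rule sum.swap)
  also have "\<dots> = (\<Sum>e\<in>EP. ef h e * edge_cost f e)"
  proof (rule sum.cong[OF refl])
    fix e
    have "(\<Sum>p\<in>P. if e \<in> path_edges p then h p * edge_cost f e else 0)
        = (\<Sum>p\<in>P. (if e \<in> path_edges p then h p else 0) * edge_cost f e)"
      by (intro sum.cong) auto
    then show "(\<Sum>p\<in>P. if e \<in> path_edges p then h p * edge_cost f e else 0) = ef h e * edge_cost f e"
      unfolding edge_flow_def sum.inter_filter[OF finite_P] by (simp add: sum_distrib_right)
  qed
  finally show ?thesis .
qed

lemma wardrop_eq_variational_ineq:
  assumes "f \<in> WE" "g \<in> H"
  shows "(\<Sum>e\<in>EP. ef f e * edge_cost f e) \<le> (\<Sum>e\<in>EP. ef g e * edge_cost f e)"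
proof -
  obtain L where L_le: "\<And>p. p \<in> P \<Longrightarrow> L \<le> path_cost f p"
    and L_eq: "\<And>p. p \<in> P \<Longrightarrow> f p > 0 \<Longrightarrow> path_cost f p = L"
    using wardrop_eq_common_cost[OF assms(1)] by blast
  have fH: "f \<in> H" using wardrop_eq_feasible assms by blast
  have "(\<Sum>p\<in>P. f p * path_cost f p) = (\<Sum>p\<in>P. f p * L)"
  proof (rule sum.cong[OF refl])
    fix p assume "p \<in> P"
    then show "f p * path_cost f p = f p * L"
      using L_eq feasible_flows_nonneg[OF fH] by (cases "f p > 0") force+
  qed
  also have "\<dots> = (\<Sum>p\<in>P. g p * L)"
    using feasible_flows_sum[OF fH] feasible_flows_sum[OF assms(2)]
    by (simp add: sum_distrib_right[symmetric])
  also have "\<dots> \<le> (\<Sum>p\<in>P. g p * path_cost f p)"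
    by (rule sum_mono) (simp add: L_le feasible_flows_nonneg[OF assms(2)] mult_left_mono)
  finally show ?thesis by (simp add: sum_path_cost_eq_sum_edge_cost)
qed

lemma wardrop_eq_edge_flow_unique:
  assumes f: "f \<in> WE" and g: "g \<in> WE"
  shows "ef f e = ef g e"
proof (cases "e \<in> EP")
  case False
  then show ?thesis by (simp add: edge_flow_outside_paths)
next
  case True
  have fH: "f \<in> H" and gH: "g \<in> H" using assms wardrop_eq_feasible by auto
  let ?t = "\<lambda>e. (ef f e - ef g e) * (edge_cost f e - edge_cost g e)"
  have t_nonneg: "?t e \<ge> 0" if "e \<in> EP" for e
  proof -
    have "e \<in> E" using that EP_subset_E by blast
    then show ?thesis
      unfolding edge_cost_def
      using c_mono[of e "ef f e" "ef g e"] c_mono[of e "ef g e" "ef f e"]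
        edge_flow_nonneg[OF fH, of e] edge_flow_nonneg[OF gH, of e]
      by (cases "ef f e \<le> ef g e") (simp_all add: mult_nonpos_nonpos)
  qed
  \<comment> \<open>Adding the variational inequalities of f (tested with g) and of g (tested with f).\<close>
  have "sum ?t EP = ((\<Sum>e\<in>EP. ef f e * edge_cost f e) - (\<Sum>e\<in>EP. ef g e * edge_cost f e))
     + ((\<Sum>e\<in>EP. ef g e * edge_cost g e) - (\<Sum>e\<in>EP. ef f e * edge_cost g e))"
    by (simp add: sum_subtractf[symmetric] sum.distrib[symmetric] algebra_simps)
  also have "\<dots> \<le> 0"
    using wardrop_eq_variational_ineq[OF f gH] wardrop_eq_variational_ineq[OF g fH] by simp
  finally have "?t e = 0"
    using sum_nonneg_eq_0_iff[OF finite_EP, of ?t] sum_nonneg[of EP ?t] t_nonneg True by force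
  moreover have "e \<in> E" using True EP_subset_E by blast
  ultimately show ?thesis
    unfolding edge_cost_def
    using c_strict_mono[of e "ef f e" "ef g e"] c_strict_mono[of e "ef g e" "ef f e"]
      edge_flow_nonneg[OF fH, of e] edge_flow_nonneg[OF gH, of e]
    by (cases "ef f e < ef g e"; cases "ef g e < ef f e") auto
qed

definition shortest_dist :: "('v list \<Rightarrow> real) \<Rightarrow> 'v \<Rightarrow> real" where
  "shortest_dist f v = Min ((\<lambda>a. sum (edge_cost f) (path_edges a)) ` od_paths V E vo v)"

lemma shortest_dist_le:
  "a \<in> od_paths V E vo v \<Longrightarrow> shortest_dist f v \<le> sum (edge_cost f) (path_edges a)"
  unfolding shortest_dist_def by (rule Min_le) (simp_all add: finite_od_paths[OF finite_V])

lemma shortest_dist_attained: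
  assumes "od_paths V E vo v \<noteq> {}"
  obtains a where "a \<in> od_paths V E vo v" "sum (edge_cost f) (path_edges a) = shortest_dist f v"
proof -
  have "shortest_dist f v \<in> (\<lambda>a. sum (edge_cost f) (path_edges a)) ` od_paths V E vo v"
    unfolding shortest_dist_def using assms
    by (intro Min_in) (simp_all add: finite_od_paths[OF finite_V])
  then obtain a where "a \<in> od_paths V E vo v" "shortest_dist f v = sum (edge_cost f) (path_edges a)"
    by blast
  with that show ?thesis by simp
qed

lemma shortest_dist_origin:
  assumes "f \<in> H"
  shows "shortest_dist f vo = 0"
proof -
  have vo: "[vo] \<in> od_paths V E vo vo" using vo_in_V by (simp add: od_paths_def)
  obtain a where a: "a \<in> od_paths V E vo vo" "sum (edge_cost f) (path_edges a) = shortest_dist f vo"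
    using shortest_dist_attained vo by blast
  have "path_edges a \<subseteq> E" using a(1) by (simp add: od_paths_def)
  then have "shortest_dist f vo \<ge> 0"
    unfolding a(2)[symmetric] using edge_cost_nonneg[OF assms] by (intro sum_nonneg) blast
  moreover have "shortest_dist f vo \<le> 0" using shortest_dist_le[OF vo] by simp
  ultimately show ?thesis by simp
qed

text \<open>Removing the cycles of the concatenated walk cannot increase its cost, as edge costs
  are nonnegative.\<close>

lemma od_path_via_cost_le:
  assumes f: "f \<in> H" and a: "a \<in> od_paths V E vo u"
    and b: "set (u # ys) \<subseteq> V" "path_edges (u # ys) \<subseteq> E" "last (u # ys) = vd"
  obtains r where "r \<in> P"
    "path_cost f r \<le> sum (edge_cost f) (path_edges a) + sum (edge_cost f) (path_edges (u # ys))"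
proof -
  have a': "a \<noteq> []" "hd a = vo" "last a = u" "set a \<subseteq> V" "path_edges a \<subseteq> E"
    using a by (auto simp: od_paths_def)
  then obtain xs where xs: "a = xs @ [u]" by (metis append_butlast_last_id)
  let ?w = "xs @ u # ys"
  have edges_w: "path_edges ?w = path_edges a \<union> path_edges (u # ys)"
    using path_edges_append[of xs u ys] xs by simp
  obtain r where r: "r \<noteq> []" "hd r = hd ?w" "last r = last ?w" "distinct r" "set r \<subseteq> set ?w"
    "path_edges r \<subseteq> path_edges ?w"
    using walk_contains_simple_path[of ?w] by auto
  have "hd ?w = vo" using a'(2) xs by (cases xs) auto
  moreover have "last ?w = vd" using b(3) by (cases ys) auto
  moreover have "set ?w \<subseteq> V" using a'(4) b(1) xs by auto
  moreover have w_E: "path_edges ?w \<subseteq> E" using edges_w a'(5) b(2) by blast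
  ultimately have "r \<in> P" using r by (auto simp: od_paths_def)
  moreover have "path_cost f r \<le> sum (edge_cost f) (path_edges ?w)"
    unfolding path_cost_eq using r(6) w_E edge_cost_nonneg[OF f] by (intro sum_mono2) auto
  moreover have "sum (edge_cost f) (path_edges ?w)
      \<le> sum (edge_cost f) (path_edges a) + sum (edge_cost f) (path_edges (u # ys))"
  proof -
    have "sum (edge_cost f) (path_edges a \<inter> path_edges (u # ys)) \<ge> 0"
      using a'(5) edge_cost_nonneg[OF f] by (intro sum_nonneg) blast
    then show ?thesis unfolding edges_w by (simp add: sum_Un)
  qed
  ultimately show ?thesis using that by fastforce
qed

lemma used_path_prefix_shortest:
  assumes f: "f \<in> WE" and q: "q \<in> P" "f q > 0" "q = xs @ u # ys"
  shows "sum (edge_cost f) (path_edges (xs @ [u])) = shortest_dist f u"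
proof (rule ccontr)
  obtain L where L_le: "\<And>p. p \<in> P \<Longrightarrow> L \<le> path_cost f p"
    and L_eq: "\<And>p. p \<in> P \<Longrightarrow> f p > 0 \<Longrightarrow> path_cost f p = L"
    using wardrop_eq_common_cost[OF f] by blast
  have q': "distinct q" "set q \<subseteq> V" "path_edges q \<subseteq> E" "hd q = vo" "last q = vd"
    using q by (auto simp: od_paths_def)
  have "path_edges (xs @ [u]) \<subseteq> path_edges q" using path_edges_prefix[of "xs @ [u]" ys] q(3) by simp
  moreover have "hd (xs @ [u]) = vo" using q'(4) q(3) by (cases xs) auto
  ultimately have prefix: "xs @ [u] \<in> od_paths V E vo u" using q' q(3) by (auto simp: od_paths_def)
  assume "sum (edge_cost f) (path_edges (xs @ [u])) \<noteq> shortest_dist f u"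
  then have less: "shortest_dist f u < sum (edge_cost f) (path_edges (xs @ [u]))"
    using shortest_dist_le[OF prefix, of f] by linarith
  obtain a where a: "a \<in> od_paths V E vo u" "sum (edge_cost f) (path_edges a) = shortest_dist f u"
    using shortest_dist_attained prefix by blast
  have "path_edges (u # ys) \<subseteq> path_edges q" using path_edges_append[of xs u ys] q(3) by simp
  then have suffix: "set (u # ys) \<subseteq> V" "path_edges (u # ys) \<subseteq> E" "last (u # ys) = vd"
    using q' q(3) by auto
  obtain r where r: "r \<in> P"
    and r_cost: "path_cost f r
      \<le> sum (edge_cost f) (path_edges a) + sum (edge_cost f) (path_edges (u # ys))"
    using od_path_via_cost_le[OF wardrop_eq_feasible[OF f] a(1) suffix] by blast
  note r_cost
  also have "\<dots>
      < sum (edge_cost f) (path_edges (xs @ [u])) + sum (edge_cost f) (path_edges (u # ys))"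
    using a(2) less by simp
  also have "\<dots> = path_cost f q"
    using sum_path_edges_append[of xs u ys "edge_cost f"] q'(1) q(3) by (simp add: path_cost_eq)
  also have "\<dots> = L" using L_eq q by blast
  finally show False using L_le[OF r] by simp
qed

lemma shortest_dist_used_edge:
  assumes f: "f \<in> WE" and pos: "ef f (u, w) > 0"
  shows "shortest_dist f w = shortest_dist f u + edge_cost f (u, w)"
proof -
  obtain q where q: "q \<in> P" "(u, w) \<in> path_edges q" "f q > 0"
    using edge_flow_posE[OF wardrop_eq_feasible[OF f] pos] by blast
  obtain xs ys where q_eq: "q = xs @ u # w # ys" using path_edges_split[OF q(2)] by blast
  have "distinct (xs @ u # [w])" using q q_eq by (simp add: od_paths_def)
  then have "sum (edge_cost f) (path_edges ((xs @ [u]) @ [w]))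
      = sum (edge_cost f) (path_edges (xs @ [u])) + edge_cost f (u, w)"
    using sum_path_edges_append[of xs u "[w]"] by simp
  then show ?thesis
    using used_path_prefix_shortest[OF f q(1,3), of xs u "w # ys"]
      used_path_prefix_shortest[OF f q(1,3), of "xs @ [u]" w ys] q_eq by simp
qed

lemma shortest_dist_increases_along_used_edge:
  assumes f: "f \<in> WE" and pos: "ef f (u, w) > 0"
  shows "shortest_dist f u < shortest_dist f w"
proof -
  have "edge_cost f (u, w) > 0"
    unfolding edge_cost_def
    using c_pos edge_flow_pos_in_E[OF wardrop_eq_feasible[OF f] pos] pos by blast
  then show ?thesis using shortest_dist_used_edge[OF assms] by simp
qed

lemma distinct_if_edge_flows_pos:
  "f \<in> WE \<Longrightarrow> \<forall>e\<in>path_edges xs. ef f e > 0 \<Longrightarrow> distinct xs"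
  by (rule distinct_if_increasing_along_path[where d = "shortest_dist f"])
    (auto intro: shortest_dist_increases_along_used_edge)

lemma path_cost_eq_shortest_dist_if_edge_flows_pos:
  assumes f: "f \<in> WE" and r: "r \<in> P" and pos: "\<forall>e\<in>path_edges r. ef f e > 0"
  shows "path_cost f r = shortest_dist f vd"
proof -
  have r': "distinct r" "r \<noteq> []" "hd r = vo" "last r = vd" using r by (auto simp: od_paths_def)
  have "\<forall>(x, y)\<in>path_edges r. shortest_dist f y = shortest_dist f x + edge_cost f (x, y)"
    using shortest_dist_used_edge[OF f] pos by auto
  then show ?thesis
    using sum_path_edges_telescope[OF r'(1,2)] r'(3,4)
      shortest_dist_origin[OF wardrop_eq_feasible[OF f]] by (simp add: path_cost_eq)
qed

lemma path_cost_min_if_edge_flows_pos: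
  assumes f: "f \<in> WE" and r: "r \<in> P" "\<forall>e\<in>path_edges r. ef f e > 0" and p: "p \<in> P"
  shows "path_cost f r \<le> path_cost f p"
proof -
  have fH: "f \<in> H" using wardrop_eq_feasible[OF f] .
  obtain L where L_le: "\<And>p. p \<in> P \<Longrightarrow> L \<le> path_cost f p"
    and L_eq: "\<And>p. p \<in> P \<Longrightarrow> f p > 0 \<Longrightarrow> path_cost f p = L"
    using wardrop_eq_common_cost[OF f] by blast
  obtain q where q: "q \<in> P" "f q > 0" using feasible_flows_pos_path[OF fH] .
  then have "\<forall>e\<in>path_edges q. ef f e > 0"
    using path_flow_le_edge_flow[OF finite_P fH] by (meson less_le_trans)
  then have "path_cost f r = path_cost f q"
    using path_cost_eq_shortest_dist_if_edge_flows_pos f q(1) r by metis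
  then show ?thesis using L_le[OF p] L_eq[OF q] by simp
qed

lemma wardrop_eq_if_same_edge_flows:
  assumes f: "f \<in> WE" and h: "h \<in> H" and same: "\<And>e. ef h e = ef f e"
  shows "h \<in> WE"
  unfolding wardrop_eq_def
proof (intro CollectI conjI ballI impI h)
  fix p r assume p: "p \<in> P" "h p > 0" and r: "r \<in> P"
  have "\<forall>e\<in>path_edges p. ef f e > 0"
    using path_flow_le_edge_flow[OF finite_P h p(1)] p(2) same by (metis less_le_trans)
  then show "path_cost h p \<le> path_cost h r"
    using path_cost_min_if_edge_flows_pos[OF f p(1) _ r] path_cost_cong[of h f] same by metis
qed

definition beckmann :: "('v list \<Rightarrow> real) \<Rightarrow> real" where
  "beckmann f = (\<Sum>e\<in>EP. integral {0..ef f e} (c e))"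

lemma continuous_on_beckmann: "continuous_on H beckmann"
  unfolding beckmann_def
proof (intro continuous_on_sum)
  fix e assume "e \<in> EP"
  then have e: "e \<in> E" using EP_subset_E by blast
  have "continuous_on {0..1} (c e)" by (rule continuous_on_subset[OF c_continuous[OF e]]) auto
  then have "continuous_on {0..1} (\<lambda>x. integral {0..x} (c e))"
    by (intro indefinite_integral_continuous_1 integrable_continuous_interval)
  moreover have "continuous_on UNIV (\<lambda>f. ef f e)"
    unfolding edge_flow_def by (intro continuous_on_sum) simp
  ultimately show "continuous_on H (\<lambda>f. integral {0..ef f e} (c e))"
    by (rule continuous_on_compose2[OF _ continuous_on_subset])
      (auto simp: edge_flow_nonneg edge_flow_le_1[OF finite_P])
qed

lemma beckmann_increment_le:
  assumes f: "f \<in> H" and g: "g \<in> H"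
  shows "beckmann g - beckmann f \<le> (\<Sum>e\<in>EP. (ef g e - ef f e) * c e (ef g e))"
  unfolding beckmann_def sum_subtractf[symmetric]
proof (rule sum_mono)
  fix e assume "e \<in> EP"
  then have e: "e \<in> E" using EP_subset_E by blast
  show "integral {0..ef g e} (c e) - integral {0..ef f e} (c e) \<le> (ef g e - ef f e) * c e (ef g e)"
  proof (rule integral_increment_le)
    show "continuous_on {0..1} (c e)" by (rule continuous_on_subset[OF c_continuous[OF e]]) auto
    show "mono_on {0..1} (c e)" by (rule mono_onI) (simp add: c_mono[OF e])
    show "ef f e \<in> {0..1}" "ef g e \<in> {0..1}"
      using edge_flow_nonneg[OF f] edge_flow_nonneg[OF g]
        edge_flow_le_1[OF finite_P f] edge_flow_le_1[OF finite_P g] by auto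
  qed
qed

text \<open>Shifting a little flow from a used path to a strictly cheaper one decreases the potential,
  because its one-sided derivative in that direction is the cost difference of the two paths.\<close>

lemma beckmann_descent:
  assumes f: "f \<in> H" and p: "p \<in> P" "f p > 0" and r: "r \<in> P"
    and cheaper: "path_cost f r < path_cost f p"
  obtains g where "g \<in> H" "beckmann g < beckmann f"
proof -
  have "r \<noteq> p" using cheaper by auto
  define d where "d = (\<lambda>q. (if q = r then 1 else 0) - (if q = p then 1 else (0::real)))"
  define g where "g t = (\<lambda>q. f q + t * d q)" for t
  define G where "G t = (\<Sum>e\<in>EP. ef d e * c e (ef f e + t * ef d e))" for t
  have ef_g: "ef (g t) e = ef f e + t * ef d e" for t e
    unfolding g_def by (simp add: edge_flow_add edge_flow_cmult)
  have g: "g t \<in> H" if "0 < t" "t \<le> f p" for t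
    unfolding g_def d_def using feasible_flows_shift[OF finite_P f p(1) r \<open>r \<noteq> p\<close>] that by simp
  have "G 0 = (\<Sum>q\<in>P. d q * path_cost f q)"
    by (simp add: G_def edge_cost_def sum_path_cost_eq_sum_edge_cost)
  also have "\<dots> = (\<Sum>q\<in>P. if q = r then path_cost f q else 0)
      - (\<Sum>q\<in>P. if q = p then path_cost f q else 0)"
    unfolding sum_subtractf[symmetric] by (intro sum.cong) (auto simp: d_def)
  also have "\<dots> = path_cost f r - path_cost f p"
    using p r finite_P by (simp add: sum.delta)
  finally have "G 0 < 0" using cheaper by simp
  have small_t: "\<forall>\<^sub>F t in at_right (0::real). 0 < t \<and> t < f p"
    unfolding eventually_at_right_field using p(2) by blast
  have "(G \<longlongrightarrow> G 0) (at_right 0)"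
    unfolding G_def
  proof (intro tendsto_sum tendsto_mult tendsto_const)
    fix e assume "e \<in> EP"
    then have e: "e \<in> E" using EP_subset_E by blast
    show "((\<lambda>t. c e (ef f e + t * ef d e)) \<longlongrightarrow> c e (ef f e + 0 * ef d e)) (at_right 0)"
    proof (rule continuous_on_tendsto_compose[OF c_continuous[OF e]])
      show "((\<lambda>t. ef f e + t * ef d e) \<longlongrightarrow> ef f e + 0 * ef d e) (at_right 0)"
        by (intro tendsto_intros)
      show "\<forall>\<^sub>F t in at_right 0. ef f e + t * ef d e \<in> {0..}"
        using small_t
      proof eventually_elim
        case (elim t)
        then show ?case using edge_flow_nonneg[OF g, of t e] ef_g by simp
      qed
    qed (simp add: edge_flow_nonneg[OF f])
  qed
  then have "\<forall>\<^sub>F t in at_right (0::real). G t < 0"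
    using order_tendstoD(2) \<open>G 0 < 0\<close> by blast
  then have "\<forall>\<^sub>F t in at_right (0::real). G t < 0 \<and> 0 < t \<and> t < f p"
    using small_t by (rule eventually_conj)
  then obtain t where t: "G t < 0" "0 < t" "t < f p"
    using eventually_happens trivial_limit_at_right_real by blast
  have "beckmann (g t) - beckmann f \<le> t * G t"
    using beckmann_increment_le[OF f g] t by (simp add: ef_g G_def sum_distrib_left algebra_simps)
  also have "\<dots> < 0" using t by (simp add: mult_pos_neg)
  finally show ?thesis using that[OF g[OF t(2) less_imp_le[OF t(3)]]] by simp
qed

lemma wardrop_eq_exists: "\<exists>f. f \<in> WE"
proof -
  obtain p0 where "p0 \<in> P" using paths_nonempty by blast
  then have "H \<noteq> {}" using path_indicator_feasible[OF finite_P] by blast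
  then obtain f where f: "f \<in> H" and f_min: "\<And>g. g \<in> H \<Longrightarrow> beckmann f \<le> beckmann g"
    using continuous_attains_inf[OF compact_feasible_flows[OF finite_P] _ continuous_on_beckmann]
    by blast
  have "f \<in> WE" unfolding wardrop_eq_def
  proof (intro CollectI conjI ballI impI f)
    fix p r assume p: "p \<in> P" "f p > 0" and r: "r \<in> P"
    show "path_cost f p \<le> path_cost f r"
    proof (rule ccontr)
      assume "\<not> path_cost f p \<le> path_cost f r"
      then obtain g where "g \<in> H" "beckmann g < beckmann f"
        using beckmann_descent[OF f p r] by force
      then show False using f_min[of g] by simp
    qed
  qed
  then show ?thesis by blast
qed

lemma used_paths_recombine:
  assumes h: "h \<in> WE" and q: "q \<in> P" "h q > 0" "q = xs @ u # ys"
    and q': "q' \<in> P" "h q' > 0" "q' = xs' @ u # ys'"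
  shows "xs @ u # ys' \<in> P"
proof -
  have hH: "h \<in> H" using wardrop_eq_feasible[OF h] .
  have q_od: "set q \<subseteq> V" "path_edges q \<subseteq> E" "hd q = vo"
    using q(1) by (auto simp: od_paths_def)
  have q'_od: "set q' \<subseteq> V" "path_edges q' \<subseteq> E" "last q' = vd"
    using q'(1) by (auto simp: od_paths_def)
  have edges: "path_edges (xs @ u # ys') \<subseteq> path_edges q \<union> path_edges q'"
    using path_edges_append[of xs u ys'] path_edges_append[of xs u ys]
      path_edges_append[of xs' u ys'] q(3) q'(3) by auto
  have "\<forall>e\<in>path_edges q \<union> path_edges q'. ef h e > 0"
    using path_flow_le_edge_flow[OF finite_P hH q(1)] path_flow_le_edge_flow[OF finite_P hH q'(1)]
      q(2) q'(2) by (metis Un_iff less_le_trans)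
  then have "distinct (xs @ u # ys')"
    using distinct_if_edge_flows_pos[OF h] edges by blast
  moreover have "hd (xs @ u # ys') = vo" using q_od(3) q(3) by (cases xs) simp_all
  moreover have "last (xs @ u # ys') = vd" using q'_od(3) q'(3) by simp
  moreover have "set (xs @ u # ys') \<subseteq> V" using q_od(1) q'_od(1) q(3) q'(3) by auto
  moreover have "path_edges (xs @ u # ys') \<subseteq> E" using q_od(2) q'_od(2) edges by blast
  ultimately show ?thesis by (simp add: od_paths_def)
qed

text \<open>Two used paths through a common vertex can swap their tails: moving flow from them to the
  two recombined paths leaves every edge flow unchanged.\<close>

lemma wardrop_eq_exchange:
  assumes h: "h \<in> WE" and q: "q \<in> P" "h q > 0" "q = xs @ u # ys"
    and q': "q' \<in> P" "h q' > 0" "q' = xs' @ u # ys'"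
  obtains h' where "h' \<in> WE" "xs @ u # ys' \<in> P" "h' (xs @ u # ys') > 0"
proof -
  define n1 where "n1 = xs @ u # ys'"
  define n2 where "n2 = xs' @ u # ys"
  have hH: "h \<in> H" using wardrop_eq_feasible[OF h] .
  have n1: "n1 \<in> P" unfolding n1_def by (rule used_paths_recombine[OF h q q'])
  have n2: "n2 \<in> P" unfolding n2_def by (rule used_paths_recombine[OF h q' q])
  let ?\<delta> = "\<lambda>y x. if x = y then 1 else (0::real)"
  define d where "d x = ?\<delta> n1 x + ?\<delta> n2 x - ?\<delta> q x - ?\<delta> q' x" for x
  define \<epsilon> where "\<epsilon> = min (h q) (h q') / 2"
  have \<epsilon>: "\<epsilon> > 0" "h q \<ge> 2 * \<epsilon>" "h q' \<ge> 2 * \<epsilon>" using q(2) q'(2) by (auto simp: \<epsilon>_def)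
  define h' where "h' x = h x + \<epsilon> * d x" for x
  have "ef d e = 0" for e
  proof -
    have "ef d e = ef (?\<delta> n1) e + ef (?\<delta> n2) e - ef (?\<delta> q) e - ef (?\<delta> q') e"
      unfolding d_def[abs_def] by (simp add: edge_flow_add edge_flow_diff)
    also have "\<dots> = (if e \<in> path_edges n1 then 1 else 0) + (if e \<in> path_edges n2 then 1 else 0)
        - (if e \<in> path_edges q then 1 else 0) - (if e \<in> path_edges q' then 1 else 0)"
      using edge_flow_path_indicator[OF finite_P] n1 n2 q(1) q'(1) by simp
    also have "\<dots> = 0"
      using indicator_path_edges_append[of xs u ys' e] indicator_path_edges_append[of xs' u ys e]
        indicator_path_edges_append[of xs u ys e] indicator_path_edges_append[of xs' u ys' e]
        n1 n2 q q' by (simp add: n1_def n2_def od_paths_def)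
    finally show ?thesis .
  qed
  then have same: "ef h' e = ef h e" for e
    unfolding h'_def[abs_def] by (simp add: edge_flow_add edge_flow_cmult)
  have "h' \<in> H"
    unfolding h'_def
  proof (rule feasible_flows_add_balanced[OF hH])
    show "\<epsilon> * d x = 0" if "x \<notin> P" for x using that n1 n2 q(1) q'(1) by (auto simp: d_def)
    show "(\<Sum>x\<in>P. \<epsilon> * d x) = 0"
      using n1 n2 q(1) q'(1) finite_P
      by (simp add: d_def sum_distrib_left[symmetric] sum.distrib sum_subtractf sum.delta)
    show "h x + \<epsilon> * d x \<ge> 0" if "x \<in> P" for x
      using feasible_flows_nonneg[OF hH that] \<epsilon> by (auto simp: d_def)
  qed
  then have "h' \<in> WE" using wardrop_eq_if_same_edge_flows[OF h] same by blast
  moreover have "h' n1 > 0"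
    using feasible_flows_nonneg[OF hH n1] \<epsilon> by (auto simp: h'_def d_def)
  ultimately show ?thesis using that n1 n1_def by blast
qed

lemma used_path_with_prefix:
  assumes g: "g \<in> WE" and p: "p \<in> P" and pos: "\<forall>e\<in>path_edges p. ef g e > 0"
    and i: "i < length p"
  obtains h q where "h \<in> WE" "q \<in> P" "h q > 0" "take (Suc i) q = take (Suc i) p"
  using i
proof (induction i arbitrary: thesis)
  case 0
  obtain q where q: "q \<in> P" "g q > 0" using feasible_flows_pos_path[OF wardrop_eq_feasible[OF g]] .
  have "take (Suc 0) q = [vo]" using q(1) by (cases q) (auto simp: od_paths_def)
  moreover have "take (Suc 0) p = [vo]" using p by (cases p) (auto simp: od_paths_def)
  ultimately show ?case using 0 g q by simp
next
  case (Suc i)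
  then obtain h q where h: "h \<in> WE" and q: "q \<in> P" "h q > 0"
    and q_prefix: "take (Suc i) q = take (Suc i) p" by auto
  let ?u = "p ! i" and ?w = "p ! Suc i"
  have i: "i < length p" using Suc.prems(2) by simp
  have "(?u, ?w) \<in> path_edges p" using path_edges_nth Suc.prems(2) by blast
  then have "ef h (?u, ?w) > 0" using pos wardrop_eq_edge_flow_unique[OF g h] by metis
  then obtain q' where q': "q' \<in> P" "(?u, ?w) \<in> path_edges q'" "h q' > 0"
    using edge_flow_posE[OF wardrop_eq_feasible[OF h]] by blast
  obtain xs' ys' where q'_eq: "q' = xs' @ ?u # ?w # ys'" using path_edges_split[OF q'(2)] by blast
  have p_prefix: "take (Suc i) p = take i p @ [?u]" using take_Suc_conv_app_nth[OF i] .
  have "q = take i p @ ?u # drop (Suc i) q"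
    using q_prefix p_prefix append_take_drop_id[of "Suc i" q]
    by (metis append_Cons append_assoc self_append_conv2)
  then obtain h' where "h' \<in> WE" "take i p @ ?u # ?w # ys' \<in> P" "h' (take i p @ ?u # ?w # ys') > 0"
    using wardrop_eq_exchange[OF h q _ q'(1,3) q'_eq] by blast
  moreover have "take (Suc (Suc i)) (take i p @ ?u # ?w # ys') = take (Suc (Suc i)) p"
    using i take_Suc_conv_app_nth[OF Suc.prems(2)] p_prefix by simp
  ultimately show ?case using Suc.prems(1) by blast
qed

lemma used_if_edge_flows_pos:
  assumes g: "g \<in> WE" and p: "p \<in> P" and pos: "\<forall>e\<in>path_edges p. ef g e > 0"
  obtains h where "h \<in> WE" "h p > 0"
proof -
  have p_od: "p \<noteq> []" "last p = vd" using p by (auto simp: od_paths_def)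
  then obtain h q where h: "h \<in> WE" and q: "q \<in> P" "h q > 0" and q_prefix: "take (length p) q = p"
    using used_path_with_prefix[OF g p pos, of "length p - 1"] by auto
  have q_od: "distinct q" "last q = vd" using q by (auto simp: od_paths_def)
  have q_eq: "q = p @ drop (length p) q" using q_prefix append_take_drop_id by metis
  \<comment> \<open>A path ending at the destination cannot be extended past it.\<close>
  have "drop (length p) q = []"
  proof (rule ccontr)
    assume ne: "drop (length p) q \<noteq> []"
    then have "vd \<in> set (drop (length p) q)" using q_od(2) q_eq by (metis last_appendR last_in_set)
    moreover have "vd \<in> set p" using p_od last_in_set by metis
    ultimately show False using q_od(1) q_eq by (metis disjoint_iff distinct_append)
  qed
  then show ?thesis using that h q q_eq by simp
qed

lemma wardrop_eq_average:
  assumes S: "finite S" "S \<noteq> {}" "S \<subseteq> WE"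
  shows "(\<lambda>x. (\<Sum>f\<in>S. f x) / card S) \<in> WE"
proof -
  obtain f0 where f0: "f0 \<in> S" using S(2) by blast
  have card: "real (card S) > 0" using S by (simp add: card_gt_0_iff)
  have H: "f \<in> H" if "f \<in> S" for f using that S(3) wardrop_eq_feasible by blast
  have "(\<lambda>x. (\<Sum>f\<in>S. f x) / card S) \<in> H"
    unfolding feasible_flows_def
  proof (intro CollectI conjI ballI allI impI)
    show "(\<Sum>f\<in>S. f x) / card S \<ge> 0" if "x \<in> P" for x
      using feasible_flows_nonneg[OF H that] by (simp add: sum_nonneg)
    show "(\<Sum>f\<in>S. f x) / card S = 0" if "x \<notin> P" for x
      using feasible_flows_outside[OF H that] by (simp add: sum.neutral)
    have "(\<Sum>x\<in>P. \<Sum>f\<in>S. f x) = (\<Sum>f\<in>S. sum f P)"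
      by (rule sum.swap)
    also have "\<dots> = (\<Sum>f\<in>S. 1)"
      using feasible_flows_sum[OF H] by (rule sum.cong[OF refl])
    finally have "(\<Sum>x\<in>P. \<Sum>f\<in>S. f x) = card S" by simp
    then show "(\<Sum>x\<in>P. (\<Sum>f\<in>S. f x) / card S) = 1"
      using card by (simp add: sum_divide_distrib[symmetric])
  qed
  moreover have "ef (\<lambda>x. (\<Sum>f\<in>S. f x) / card S) e = ef f0 e" for e
  proof -
    have "ef (\<lambda>x. (\<Sum>f\<in>S. f x) / card S) e = (\<Sum>f\<in>S. ef f e) / card S"
      unfolding edge_flow_def by (simp add: sum_divide_distrib[symmetric] sum.swap[of _ S])
    also have "\<dots> = (\<Sum>f\<in>S. ef f0 e) / card S"
      using wardrop_eq_edge_flow_unique S(3) f0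
      by (intro arg_cong2[where f = "(/)"] sum.cong) blast+
    finally show ?thesis using card by simp
  qed
  ultimately show ?thesis using wardrop_eq_if_same_edge_flows S(3) f0 by blast
qed

lemma exists_wardrop_eq_using_all_used_paths:
  "\<exists>f\<in>WE. \<forall>p\<in>used_paths P \<Theta> C \<phi>. f p > 0"
proof -
  let ?used = "used_paths P \<Theta> C \<phi>"
  obtain f0 where f0: "f0 \<in> WE" using wardrop_eq_exists by blast
  have "\<forall>p\<in>?used. \<exists>h. h \<in> WE \<and> h p > 0" by (auto simp: used_paths_def)
  then obtain witness where witness: "\<forall>p\<in>?used. witness p \<in> WE \<and> witness p p > 0"
    by (rule bchoice[elim_format]) blast
  define S where "S = insert f0 (witness ` ?used)"
  have "finite ?used" using finite_P by (simp add: used_paths_def)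
  then have S: "finite S" "S \<noteq> {}" "S \<subseteq> WE"
    using f0 witness by (simp_all add: S_def image_subset_iff)
  have pos: "(\<Sum>f\<in>S. f p) / card S > 0" if p: "p \<in> ?used" for p
  proof -
    have "p \<in> P" using p by (simp add: used_paths_def)
    then have nonneg: "\<forall>f\<in>S. f p \<ge> 0"
      using S(3) feasible_flows_nonneg[OF wardrop_eq_feasible] by blast
    have "witness p \<in> S" using p by (simp add: S_def)
    then have "witness p p \<le> (\<Sum>f\<in>S. f p)"
      using member_le_sum[of "witness p" S "\<lambda>f. f p"] S(1) nonneg by blast
    moreover have "witness p p > 0" using witness p by blast
    moreover have "card S > 0" using S(1,2) by (simp add: card_gt_0_iff)
    ultimately show ?thesis by simp
  qed
  show ?thesis by (rule bexI[OF _ wardrop_eq_average[OF S]]) (simp add: pos)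
qed

lemma used_paths_iff_edge_flows_pos:
  assumes g: "g \<in> WE" and p: "p \<in> P"
  shows "p \<in> used_paths P \<Theta> C \<phi> \<longleftrightarrow> (\<forall>e\<in>path_edges p. ef g e > 0)"
proof
  assume "p \<in> used_paths P \<Theta> C \<phi>"
  then obtain f where f: "f \<in> WE" "f p > 0" by (auto simp: used_paths_def)
  then show "\<forall>e\<in>path_edges p. ef g e > 0"
    using path_flow_le_edge_flow[OF finite_P wardrop_eq_feasible[OF f(1)] p]
      wardrop_eq_edge_flow_unique[OF f(1) g] by (metis less_le_trans)
next
  assume "\<forall>e\<in>path_edges p. ef g e > 0"
  then obtain h where "h \<in> WE" "h p > 0" using used_if_edge_flows_pos[OF g p] by blast
  then show "p \<in> used_paths P \<Theta> C \<phi>" using p by (auto simp: used_paths_def)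
qed

end

theorem lemma2:
  fixes V :: "'v set" and E :: "('v \<times> 'v) set" and vo vd :: 'v
    and \<Theta> :: "'s set" and C :: "'s \<Rightarrow> ('v \<times> 'v) \<Rightarrow> real \<Rightarrow> real" and \<phi> :: "'s \<Rightarrow> real"
  defines "P \<equiv> od_paths V E vo vd"
  assumes "finite V" and "E \<subseteq> V \<times> V" and "vo \<in> V" and "vd \<in> V"
    and "P \<noteq> {}"
    and "finite \<Theta>"
    and "\<And>s e. s \<in> \<Theta> \<Longrightarrow> e \<in> E \<Longrightarrow> continuous_on {0..} (C s e)"
    and "\<And>s e. s \<in> \<Theta> \<Longrightarrow> e \<in> E \<Longrightarrow> strict_mono_on {0..} (C s e)"
    and "\<And>s e x. s \<in> \<Theta> \<Longrightarrow> e \<in> E \<Longrightarrow> x \<ge> 0 \<Longrightarrow> C s e x \<ge> 0"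
    and "\<phi> \<in> prob_simplex \<Theta>"
  shows "(\<exists>f\<in>wardrop_eq P \<Theta> C \<phi>. \<forall>p\<in>used_paths P \<Theta> C \<phi>. f p > 0)
       \<and> (\<forall>g\<in>wardrop_eq P \<Theta> C \<phi>. \<forall>p\<in>P.
            p \<in> used_paths P \<Theta> C \<phi> \<longleftrightarrow> (\<forall>e\<in>path_edges p. edge_flow P g e > 0))"
proof -
  interpret routing_game V E vo vd \<Theta> C \<phi>
    by unfold_locales (use assms in \<open>simp_all add: P_def\<close>)
  show ?thesis
    unfolding P_def
    using exists_wardrop_eq_using_all_used_paths used_paths_iff_edge_flows_pos by blast
qed

end
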